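(* Let $X$ be as in the context. Then $X$ is explosive if all of the following hold: (a) $m(x)x-v(x)\gtrsim x^c$ for some constant $c>2$; (b) $\liminf_{x\to\infty}H_1(x)>1$; (c) for every $q>2$, if $\liminf_{x\to\infty}\dfrac{v(x)}{x^2(\log x)^q}=0$ then $\lim_{x\to\infty}\dfrac{v(x)}{x^2(\log x)^q}=0$.
   Context: Let $\mathbb S\subseteq\mathbb Z_{\ge0}$ be an infinite set and let $X$ be an irreducible continuous-time Markov chain on $\mathbb S$ whose generator acts on functions $f:\mathbb S\to\mathbb R$ by $\mathcal A f(x)=\sum_{\eta\in\mathbb Z}\lambda_\eta(x)\big(f(x+\eta)-f(x)\big)$, where $\lambda_\eta(x)$ is the rate of the jump $x\to x+\eta$ (and $\lambda_\eta(x)=0$ whenever $x+\eta\notin\mathbb S$). Standing assumption: (a) there is a finite set $\Gamma\subset\mathbb Z$ such that $\lambda_\eta\equiv0$ for $\eta\notin\Gamma$; (b) $0\le\lambda_\eta(x)<\infty$ for all $x,\eta$. Define $m(x)=\sum_{\eta}\eta\,\lambda_\eta(x)$, $v(x)=\frac12\sum_\eta\eta^2\lambda_\eta(x)$ (positive on $\mathbb S$), and for a constant $p$ and $x>1$, $H_p(x)=\dfrac{(\log x)(m(x)x-p\,v(x))}{v(x)}$. Notation: $g\gtrsim h$ means there is $C>0$ with $h(x)\le C g(x)$ for all sufficiently large $x\in\mathbb S$; limits are as $x\to\infty$ in $\mathbb S$. $X$ is explosive if $P(T<\infty)>0$, where $T=\lim_k T_k$ and $T_k$ is the $k$-th jump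 time. *)

theory Defs
  imports "HOL-Probability.Probability"
begin

text \<open>Rates: lam eta x is the rate of the jump x -> x + eta. States are integers
(the state space S is a subset of the nonnegative integers).\<close>

definition drift :: "int set \<Rightarrow> (int \<Rightarrow> int \<Rightarrow> real) \<Rightarrow> int \<Rightarrow> real" where
  "drift \<Gamma> lam x = (\<Sum>\<eta>\<in>\<Gamma>. real_of_int \<eta> * lam \<eta> x)"

definition vfun :: "int set \<Rightarrow> (int \<Rightarrow> int \<Rightarrow> real) \<Rightarrow> int \<Rightarrow> real" where
  "vfun \<Gamma> lam x = (1/2) * (\<Sum>\<eta>\<in>\<Gamma>. (real_of_int \<eta>)^2 * lam \<eta> x)"

definition Hfun :: "int set \<Rightarrow> (int \<Rightarrow> int \<Rightarrow> real) \<Rightarrow> real \<Rightarrow> int \<Rightarrow> real" where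
  "Hfun \<Gamma> lam p x = ln (real_of_int x) * (drift \<Gamma> lam x * real_of_int x - p * vfun \<Gamma> lam x)
                        / vfun \<Gamma> lam x"

text \<open>Total rate of leaving x (jumps with eta = 0 do not change the state).\<close>
definition out_rate :: "int set \<Rightarrow> (int \<Rightarrow> int \<Rightarrow> real) \<Rightarrow> int \<Rightarrow> real" where
  "out_rate \<Gamma> lam x = (\<Sum>\<eta>\<in>\<Gamma> - {0}. lam \<eta> x)"

definition jump_prob :: "int set \<Rightarrow> (int \<Rightarrow> int \<Rightarrow> real) \<Rightarrow> int \<Rightarrow> int \<Rightarrow> real" where
  "jump_prob \<Gamma> lam x y = (if y = x then 0 else lam (y - x) x / out_rate \<Gamma> lam x)"

definition irreducible_chain :: "int set \<Rightarrow> (int \<Rightarrow> int \<Rightarrow> real) \<Rightarrow> bool" where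
  "irreducible_chain S lam \<longleftrightarrow>
     (\<forall>x\<in>S. \<forall>y\<in>S. (x, y) \<in> {(a, a + \<eta>) | a \<eta>. a \<in> S \<and> \<eta> \<noteq> 0 \<and> lam \<eta> a > 0}\<^sup>*)"

text \<open>A realization of the (minimal) continuous-time Markov chain started at x0:
  Y n is the state after the n-th jump (Y 0 = x0), Hold n the holding time in Y n,
  so that the n-th jump time is T_n = sum of Hold i for i < n.  The joint law is
  specified on the generating cylinder events: the jump chain has kernel jump_prob and,
  given the jump chain, the holding times are independent, Hold i ~ Exp(out_rate (Y i)).\<close>
definition ctmc_realization ::
  "int set \<Rightarrow> (int \<Rightarrow> int \<Rightarrow> real) \<Rightarrow> int \<Rightarrow> 'w measure \<Rightarrow> (nat \<Rightarrow> 'w \<Rightarrow> int) \<Rightarrow> (nat \<Rightarrow> 'w \<Rightarrow> real) \<Rightarrow> bool" where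
  "ctmc_realization \<Gamma> lam x0 M Y Hold \<longleftrightarrow>
     prob_space M \<and>
     (\<forall>n. Y n \<in> measurable M (count_space UNIV)) \<and>
     (\<forall>n. Hold n \<in> borel_measurable M) \<and>
     (\<forall>n (xs :: nat \<Rightarrow> int) (t :: nat \<Rightarrow> real). (\<forall>i\<le>n. 0 \<le> t i) \<longrightarrow>
        measure M {\<omega> \<in> space M. \<forall>i\<le>n. Y i \<omega> = xs i \<and> t i < Hold i \<omega>}
        = (if xs 0 = x0 then 1 else 0)
          * (\<Prod>i<n. jump_prob \<Gamma> lam (xs i) (xs (Suc i)))
          * (\<Prod>i\<le>n. exp (- out_rate \<Gamma> lam (xs i) * t i)))"

definition explosive :: "'w measure \<Rightarrow> (nat \<Rightarrow> 'w \<Rightarrow> real) \<Rightarrow> bool" where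
  "explosive M Hold \<longleftrightarrow> measure M {\<omega> \<in> space M. convergent (\<lambda>k. \<Sum>i<k. Hold i \<omega>)} > 0"

definition at_top_in :: "int set \<Rightarrow> int filter" where
  "at_top_in S = inf at_top (principal S)"

end

theory Submission
  imports Defs "HOL-Real_Asymp.Real_Asymp"
begin

(* The function f(x) = 1 / ln (ln x), frozen for x <= 16, is positive and decreases to 0.
   A second-order Taylor expansion bounds its generator by
     A f(x) <= (f''(x - R) - s(x)) v(x) - s(x) (m(x) x - v(x)),   s(x) = 1 / (x^2 ln x (ln ln x)^2),
   where R bounds the jump sizes and ln x (f''(x - R) / s(x) - 1) -> 1. By (b) the first term is
   at most a fixed fraction < 1 of s(x) (m(x) x - v(x)), which tends to infinity by (a) since c > 2,
   so A f <= -1 above some level N. Hence f is a supermartingale for the jump chain killed below N: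
   from a state z > N, reached with positive probability by irreducibility, the chain stays above N
   forever with probability at least 1 - f(z) / f(N) > 0, and on that event the expected sum of the
   holding times is at most 2 f(z). *)

section \<open>The Lyapunov function 1 / ln (ln y)\<close>

definition inv_lnln :: "real \<Rightarrow> real" where
  "inv_lnln y = 1 / ln (ln y)"

definition inv_lnln' :: "real \<Rightarrow> real" where
  "inv_lnln' y = -1 / (y * ln y * (ln (ln y))^2)"

definition inv_lnln'' :: "real \<Rightarrow> real" where
  "inv_lnln'' y = (ln (ln y) * (ln y + 1) + 2) / (y^2 * (ln y)^2 * (ln (ln y))^3)"

definition lnln_scale :: "real \<Rightarrow> real" where
  "lnln_scale y = 1 / (y^2 * ln y * (ln (ln y))^2)"

lemma ln_ln_pos:
  fixes y :: real assumes "16 \<le> y"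
  shows "1 < ln y" and "0 < ln (ln y)"
proof -
  have "exp 1 < (16::real)" using exp_le by linarith
  then have "ln (exp 1) < ln y" using assms by (subst ln_less_cancel_iff) auto
  then show "1 < ln y" by simp
  then show "0 < ln (ln y)" by simp
qed

lemma lnln_scale_pos: "16 \<le> y \<Longrightarrow> 0 < lnln_scale y"
  using ln_ln_pos[of y] unfolding lnln_scale_def by simp

lemma inv_lnln'_eq: "16 \<le> y \<Longrightarrow> inv_lnln' y = - y * lnln_scale y"
  using ln_ln_pos[of y] unfolding inv_lnln'_def lnln_scale_def
  by (simp add: field_simps power2_eq_square)

lemma inv_lnln''_eq:
  "16 \<le> y \<Longrightarrow> inv_lnln'' y = lnln_scale y * (1 + 1 / ln y + 2 / (ln y * ln (ln y)))"
  using ln_ln_pos[of y] unfolding inv_lnln''_def lnln_scale_def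
  by (simp add: field_simps power2_eq_square power3_eq_cube)

lemma has_real_derivative_inv_lnln:
  assumes "16 \<le> y" shows "(inv_lnln has_real_derivative inv_lnln' y) (at y)"
proof -
  note l = ln_ln_pos[OF assms]
  show ?thesis unfolding inv_lnln_def inv_lnln'_def
    apply (rule DERIV_cong)
     apply (auto intro!: derivative_eq_intros simp: l)[1]
    using l assms by (auto simp: field_simps power2_eq_square)
qed

lemma has_real_derivative_inv_lnln':
  assumes "16 \<le> y" shows "(inv_lnln' has_real_derivative inv_lnln'' y) (at y)"
proof -
  note l = ln_ln_pos[OF assms]
  show ?thesis unfolding inv_lnln'_def inv_lnln''_def
    apply (rule DERIV_cong)
     apply (auto intro!: derivative_eq_intros simp: l)[1]
    using l assms by (auto simp: field_simps power2_eq_square power3_eq_cube)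
qed

lemma inv_lnln_strict_antimono: "16 \<le> a \<Longrightarrow> a < b \<Longrightarrow> inv_lnln b < inv_lnln a"
  using ln_ln_pos[of a] ln_ln_pos[of b] unfolding inv_lnln_def
  by (intro divide_strict_left_mono) (auto intro!: mult_pos_pos)

lemma inv_lnln_antimono: "16 \<le> a \<Longrightarrow> a \<le> b \<Longrightarrow> inv_lnln b \<le> inv_lnln a"
  using inv_lnln_strict_antimono[of a b] by (cases "a = b") auto

lemma inv_lnln''_antimono:
  assumes "16 \<le> a" "a \<le> b" shows "inv_lnln'' b \<le> inv_lnln'' a"
proof -
  have b: "16 \<le> b" using assms by simp
  note la = ln_ln_pos[OF assms(1)] and lb = ln_ln_pos[OF b]
  have ln: "ln a \<le> ln b" and lnln: "ln (ln a) \<le> ln (ln b)" using la lb assms by auto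
  have "a^2 * ln a * (ln (ln a))^2 \<le> b^2 * ln b * (ln (ln b))^2"
    using la assms ln lnln by (intro mult_mono power_mono) auto
  then have "lnln_scale b \<le> lnln_scale a"
    unfolding lnln_scale_def using la assms by (intro frac_le) auto
  moreover have "1 + 1 / ln b + 2 / (ln b * ln (ln b)) \<le> 1 + 1 / ln a + 2 / (ln a * ln (ln a))"
    using la lb ln lnln by (intro add_mono divide_left_mono mult_mono) (auto intro!: mult_pos_pos)
  ultimately show ?thesis
    unfolding inv_lnln''_eq[OF assms(1)] inv_lnln''_eq[OF b] using lnln_scale_pos[OF b] lb
    by (intro mult_mono) (auto intro!: add_nonneg_nonneg)
qed

text \<open>Since \<open>inv_lnln''\<close> is decreasing, the Lagrange remainder over \<open>[x - R, x + R]\<close> is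
  bounded by its value at the left end point.\<close>
lemma inv_lnln_taylor_le:
  fixes x e R :: real assumes "16 \<le> x - R" "\<bar>e\<bar> \<le> R"
  shows "inv_lnln (x + e) \<le> inv_lnln x + inv_lnln' x * e + inv_lnln'' (x - R) * e^2 / 2"
proof (cases "e = 0")
  case True then show ?thesis by simp
next
  case False
  define diff where "diff = (\<lambda>m::nat. if m = 0 then inv_lnln else if m = 1 then inv_lnln' else inv_lnln'')"
  have "\<forall>m t. m < 2 \<and> x - R \<le> t \<and> t \<le> x + R \<longrightarrow> DERIV (diff m) t :> diff (Suc m) t"
    using assms has_real_derivative_inv_lnln has_real_derivative_inv_lnln'
    by (auto simp: diff_def less_2_cases_iff)
  then have "\<exists>t. (if e < 0 then x + e < t \<and> t < x else x < t \<and> t < x + e) \<and>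
      inv_lnln (x + e) = inv_lnln x + inv_lnln' x * e + inv_lnln'' t * e^2 / 2"
    using Taylor[of 2 diff inv_lnln "x - R" "x + R" x "x + e"] assms False
    by (simp add: diff_def numeral_2_eq_2)
  then obtain t where t: "if e < 0 then x + e < t \<and> t < x else x < t \<and> t < x + e"
    and eq: "inv_lnln (x + e) = inv_lnln x + inv_lnln' x * e + inv_lnln'' t * e^2 / 2"
    by blast
  have "x - R \<le> t" using t assms by (auto split: if_splits)
  then have "inv_lnln'' t * e^2 / 2 \<le> inv_lnln'' (x - R) * e^2 / 2"
    using assms by (intro divide_right_mono mult_right_mono inv_lnln''_antimono) auto
  then show ?thesis using eq by simp
qed

lemma tendsto_ln_mult_minus_one:
  fixes a b :: "real \<Rightarrow> real"
  assumes a: "((\<lambda>x. ln x * (a x - 1)) \<longlongrightarrow> 0) at_top"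
    and b: "((\<lambda>x. ln x * (b x - 1)) \<longlongrightarrow> L) at_top"
  shows "((\<lambda>x. ln x * (a x * b x - 1)) \<longlongrightarrow> L) at_top"
proof -
  have "((\<lambda>x. ln x * (b x - 1) * (1 / ln x) + 1) \<longlongrightarrow> L * 0 + 1) at_top"
    by (intro tendsto_intros b) real_asymp
  moreover have "eventually (\<lambda>x. ln x * (b x - 1) * (1 / ln x) + 1 = b x) at_top"
    using eventually_gt_at_top[of 1] by eventually_elim simp
  ultimately have "(b \<longlongrightarrow> 1) at_top"
    by (simp add: tendsto_cong)
  then have "((\<lambda>x. ln x * (a x - 1) * b x + ln x * (b x - 1)) \<longlongrightarrow> 0 * 1 + L) at_top"
    by (intro tendsto_intros a b)
  then show ?thesis by (simp add: algebra_simps)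
qed

lemma tendsto_inv_lnln''_shift:
  fixes R :: real
  shows "((\<lambda>x. ln x * (inv_lnln'' (x - R) / lnln_scale x - 1)) \<longlongrightarrow> 1) at_top"
proof -
  define a b c \<beta> where "a = (\<lambda>x::real. (x / (x - R))^2)" and "b = (\<lambda>x. ln x / ln (x - R))"
    and "c = (\<lambda>x. ln (ln x) / ln (ln (x - R)))"
    and "\<beta> = (\<lambda>x. 1 + 1 / ln (x - R) + 2 / (ln (x - R) * ln (ln (x - R))))"
  have c: "((\<lambda>x. ln x * (c x - 1)) \<longlongrightarrow> 0) at_top"
  proof -
    have "((\<lambda>x::real. ln x * (ln (ln x) - ln (ln (x - R))) * (1 / ln (ln (x - R)))) \<longlongrightarrow> 0 * 0) at_top"
      by (intro tendsto_intros; real_asymp)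
    moreover have "eventually (\<lambda>x. ln x * (ln (ln x) - ln (ln (x - R))) * (1 / ln (ln (x - R)))
        = ln x * (c x - 1)) at_top"
      using eventually_ge_at_top[of "16 + R"]
    proof eventually_elim
      case (elim x)
      then show ?case using ln_ln_pos(2)[of "x - R"] by (simp add: c_def field_simps)
    qed
    ultimately show ?thesis by (simp add: tendsto_cong)
  qed
  have "((\<lambda>x. ln x * (a x * (b x * (c x * (c x * \<beta> x))) - 1)) \<longlongrightarrow> 1) at_top"
    by (intro tendsto_ln_mult_minus_one c) (unfold a_def b_def \<beta>_def; real_asymp)+
  moreover have "eventually (\<lambda>x. ln x * (a x * (b x * (c x * (c x * \<beta> x))) - 1)
      = ln x * (inv_lnln'' (x - R) / lnln_scale x - 1)) at_top"
    using eventually_ge_at_top[of "16 + \<bar>R\<bar>"]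
  proof eventually_elim
    case (elim x)
    then have "16 \<le> x" "16 \<le> x - R" by auto
    then show ?case
      using ln_ln_pos[of x] ln_ln_pos[of "x - R"]
      unfolding inv_lnln''_eq[OF \<open>16 \<le> x - R\<close>] lnln_scale_def a_def b_def c_def \<beta>_def
      by (simp add: field_simps power2_eq_square)
  qed
  ultimately show ?thesis by (rule Lim_transform_eventually)
qed

lemma filterlim_powr_lnln_scale:
  fixes c :: real assumes "2 < c"
  shows "filterlim (\<lambda>x. x powr c * lnln_scale x) at_top at_top"
  unfolding lnln_scale_def using assms by real_asymp

section \<open>The drift of the Lyapunov function\<close>

definition lyapunov :: "int \<Rightarrow> real" where
  "lyapunov x = inv_lnln (max (real_of_int x) 16)"

lemma lyapunov_nonneg: "0 \<le> lyapunov x"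
  using ln_ln_pos(2)[of "max (real_of_int x) 16"] unfolding lyapunov_def inv_lnln_def by simp

lemma lyapunov_antimono: "x \<le> y \<Longrightarrow> lyapunov y \<le> lyapunov x"
  unfolding lyapunov_def by (intro inv_lnln_antimono) auto

lemma lyapunov_strict_antimono: "max x 16 < y \<Longrightarrow> lyapunov y < lyapunov x"
  unfolding lyapunov_def by (intro inv_lnln_strict_antimono) auto

lemma drift_arith:
  fixes s v u D F d :: real
  assumes "0 < s" "0 < v" "0 < u" "0 < d"
    and H: "(1 + d) * v < u * D" and F: "u * (F - s) < (1 + d / 2) * s"
    and large: "2 * (1 + d) \<le> d * (s * D)"
  shows "(F - s) * v - s * D \<le> -1"
proof -
  have "0 < u * D" using H \<open>0 < v\<close> \<open>0 < d\<close> by (smt (verit) mult_pos_pos)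
  then have "0 < D" using \<open>0 < u\<close> by (simp add: zero_less_mult_iff)
  have "(1 + d) * ((F - s) * v) \<le> (1 + d / 2) * s * D"
  proof (cases "F - s \<le> 0")
    case True
    then have "(1 + d) * ((F - s) * v) \<le> 0"
      using \<open>0 < v\<close> \<open>0 < d\<close> by (simp add: mult_nonneg_nonpos mult_nonpos_nonneg)
    also have "0 \<le> (1 + d / 2) * s * D" using \<open>0 < s\<close> \<open>0 < D\<close> \<open>0 < d\<close> by simp
    finally show ?thesis .
  next
    case False
    have "(1 + d) * ((F - s) * v) = (F - s) * ((1 + d) * v)" by simp
    also have "\<dots> \<le> (F - s) * (u * D)" using H False by (intro mult_left_mono) auto
    also have "\<dots> = D * (u * (F - s))" by simp
    also have "\<dots> \<le> D * ((1 + d / 2) * s)" using F \<open>0 < D\<close> by (intro mult_left_mono) auto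
    finally show ?thesis by (simp add: mult_ac)
  qed
  then have "(1 + d) * ((F - s) * v - s * D) \<le> - (d / 2) * (s * D)"
    by (simp add: algebra_simps)
  also have "\<dots> \<le> - (1 + d)" using large by simp
  finally have "(1 + d) * ((F - s) * v - s * D) \<le> (1 + d) * (-1)" by simp
  then show ?thesis using \<open>0 < d\<close> by (simp only: mult_le_cancel_left_pos)
qed

lemma eventually_at_top_in_real:
  "eventually P at_top \<Longrightarrow> eventually (\<lambda>x. P (real_of_int x)) (at_top_in S)"
  unfolding at_top_in_def
  by (rule filter_leD[OF inf_le1]) (use filterlim_real_of_int_at_top filterlim_iff in blast)

lemma lyapunov_generator_le:
  fixes \<Gamma> :: "int set" and lam :: "int \<Rightarrow> int \<Rightarrow> real" and x :: int and R :: real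
  assumes rates_nonneg: "\<And>\<eta>. 0 \<le> lam \<eta> x" and R: "\<And>\<eta>. \<eta> \<in> \<Gamma> \<Longrightarrow> \<bar>real_of_int \<eta>\<bar> \<le> R"
    and "0 \<le> R" and "16 \<le> real_of_int x - R"
  shows "(\<Sum>\<eta>\<in>\<Gamma>. lam \<eta> x * (lyapunov (x + \<eta>) - lyapunov x))
    \<le> (inv_lnln'' (real_of_int x - R) - lnln_scale (real_of_int x)) * vfun \<Gamma> lam x
      - lnln_scale (real_of_int x) * (drift \<Gamma> lam x * real_of_int x - vfun \<Gamma> lam x)"
proof -
  define X where "X = real_of_int x"
  define s where "s = lnln_scale X"
  define F where "F = inv_lnln'' (X - R)"
  have "16 \<le> X - R" "16 \<le> X" using assms(3,4) by (auto simp: X_def)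
  have step: "lyapunov (x + \<eta>) - lyapunov x \<le> - X * s * real_of_int \<eta> + F * (real_of_int \<eta>)^2 / 2"
    if "\<eta> \<in> \<Gamma>" for \<eta>
  proof -
    have "16 \<le> X + real_of_int \<eta>" using \<open>16 \<le> X - R\<close> R[OF that] by auto
    then have "lyapunov (x + \<eta>) = inv_lnln (X + real_of_int \<eta>)" "lyapunov x = inv_lnln X"
      using \<open>16 \<le> X\<close> by (simp_all add: lyapunov_def X_def)
    then show ?thesis
      using inv_lnln_taylor_le[OF \<open>16 \<le> X - R\<close> R[OF that]] inv_lnln'_eq[OF \<open>16 \<le> X\<close>]
      by (simp add: s_def F_def)
  qed
  have "(\<Sum>\<eta>\<in>\<Gamma>. lam \<eta> x * (lyapunov (x + \<eta>) - lyapunov x))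
      \<le> (\<Sum>\<eta>\<in>\<Gamma>. lam \<eta> x * (- X * s * real_of_int \<eta> + F * (real_of_int \<eta>)^2 / 2))"
    using step rates_nonneg by (intro sum_mono mult_left_mono) auto
  also have "\<dots> = - X * s * drift \<Gamma> lam x + F * vfun \<Gamma> lam x"
    unfolding drift_def vfun_def
    by (simp add: sum_distrib_left sum.distrib sum_subtractf sum_negf algebra_simps sum_divide_distrib)
  also have "\<dots> = (F - s) * vfun \<Gamma> lam x - s * (drift \<Gamma> lam x * X - vfun \<Gamma> lam x)"
    by (simp add: algebra_simps)
  finally show ?thesis by (simp add: X_def s_def F_def)
qed

lemma eventually_lyapunov_generator_le:
  fixes S \<Gamma> :: "int set" and lam :: "int \<Rightarrow> int \<Rightarrow> real"
  assumes "finite \<Gamma>" and rates_nonneg: "\<forall>\<eta> x. 0 \<le> lam \<eta> x"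
    and v_pos: "\<forall>x\<in>S. vfun \<Gamma> lam x > 0"
    and cond_a: "\<exists>c > 2. \<exists>C > 0. \<exists>N. \<forall>x\<in>S. x \<ge> N \<longrightarrow>
                   real_of_int x powr c \<le> C * (drift \<Gamma> lam x * real_of_int x - vfun \<Gamma> lam x)"
    and cond_b: "Liminf (at_top_in S) (\<lambda>x. ereal (Hfun \<Gamma> lam 1 x)) > 1"
  shows "eventually (\<lambda>x. (\<Sum>\<eta>\<in>\<Gamma>. lam \<eta> x * (lyapunov (x + \<eta>) - lyapunov x)) \<le> -1) (at_top_in S)"
proof -
  obtain c C N where "2 < c" "0 < C"
    and growth: "\<forall>x\<in>S. x \<ge> N \<longrightarrow> real_of_int x powr c \<le> C * (drift \<Gamma> lam x * real_of_int x - vfun \<Gamma> lam x)"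
    using cond_a by blast
  obtain z where "1 < z" and "ereal z < Liminf (at_top_in S) (\<lambda>x. ereal (Hfun \<Gamma> lam 1 x))"
    using ereal_dense2[OF cond_b[unfolded one_ereal_def]] by auto
  then have ev_H: "eventually (\<lambda>x. z < Hfun \<Gamma> lam 1 x) (at_top_in S)"
    using less_LiminfD by fastforce
  define d where "d = z - 1"
  have "0 < d" using \<open>1 < z\<close> by (simp add: d_def)
  define R where "R = Max (insert 0 ((\<lambda>\<eta>. \<bar>real_of_int \<eta>\<bar>) ` \<Gamma>))"
  have R: "\<bar>real_of_int \<eta>\<bar> \<le> R" if "\<eta> \<in> \<Gamma>" for \<eta>
    unfolding R_def using that \<open>finite \<Gamma>\<close> by (intro Max_ge) auto
  have "0 \<le> R" unfolding R_def using \<open>finite \<Gamma>\<close> by (intro Max_ge) auto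
  have "eventually (\<lambda>X. 16 + R \<le> X \<and> ln X * (inv_lnln'' (X - R) / lnln_scale X - 1) < 1 + d / 2
      \<and> 2 * (1 + d) * C / d \<le> X powr c * lnln_scale X) at_top"
    using eventually_ge_at_top[of "16 + R"]
      order_tendstoD(2)[OF tendsto_inv_lnln''_shift[of R], of "1 + d / 2"] \<open>0 < d\<close>
      filterlim_powr_lnln_scale[OF \<open>2 < c\<close>, unfolded filterlim_at_top, rule_format, of "2 * (1 + d) * C / d"]
    by (simp add: eventually_conj)
  then have "eventually (\<lambda>x. 16 + R \<le> real_of_int x
      \<and> ln (real_of_int x) * (inv_lnln'' (real_of_int x - R) / lnln_scale (real_of_int x) - 1) < 1 + d / 2
      \<and> 2 * (1 + d) * C / d \<le> real_of_int x powr c * lnln_scale (real_of_int x)) (at_top_in S)"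
    by (rule eventually_at_top_in_real)
  moreover have "eventually (\<lambda>x. x \<in> S \<and> N \<le> x) (at_top_in S)"
    unfolding at_top_in_def eventually_inf_principal
    by (auto intro: eventually_mono[OF eventually_ge_at_top[of N]])
  moreover note ev_H
  ultimately show ?thesis
  proof eventually_elim
    case (elim x)
    define X where "X = real_of_int x"
    define s where "s = lnln_scale X"
    define F where "F = inv_lnln'' (X - R)"
    let ?D = "drift \<Gamma> lam x * X - vfun \<Gamma> lam x"
    have "16 \<le> X - R" using elim by (simp add: X_def)
    then have "16 \<le> X" "0 < s" using \<open>0 \<le> R\<close> lnln_scale_pos[of X] by (auto simp: s_def)
    have "(\<Sum>\<eta>\<in>\<Gamma>. lam \<eta> x * (lyapunov (x + \<eta>) - lyapunov x)) \<le> (F - s) * vfun \<Gamma> lam x - s * ?D"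
      unfolding X_def s_def F_def using rates_nonneg R \<open>0 \<le> R\<close> elim by (intro lyapunov_generator_le) auto
    also have "\<dots> \<le> -1"
    proof (rule drift_arith[where u = "ln X" and d = d])
      show "0 < s" "0 < d" by fact+
      show "0 < vfun \<Gamma> lam x" "0 < ln X" using v_pos elim ln_ln_pos[OF \<open>16 \<le> X\<close>] by auto
      show "(1 + d) * vfun \<Gamma> lam x < ln X * ?D"
        using elim v_pos by (simp add: Hfun_def d_def X_def pos_less_divide_eq mult.commute)
      show "ln X * (F - s) < (1 + d / 2) * s"
        using elim \<open>0 < s\<close> by (simp add: F_def s_def X_def pos_divide_less_eq algebra_simps)
      have "2 * (1 + d) * C / d \<le> X powr c * s" using elim by (simp add: X_def s_def)
      also have "\<dots> \<le> C * ?D * s" using growth elim \<open>0 < s\<close> by (simp add: X_def mult_right_mono)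
      finally have "2 * (1 + d) / d * C \<le> (s * ?D) * C" by (simp add: mult_ac)
      then have "2 * (1 + d) / d \<le> s * ?D" using \<open>0 < C\<close> by (rule mult_right_le_imp_le)
      then show "2 * (1 + d) \<le> d * (s * ?D)" using \<open>0 < d\<close> by (simp add: field_simps)
    qed
    finally show ?case .
  qed
qed

section \<open>A Lyapunov criterion for explosion\<close>

lemma ennreal_le_suminf_grid:
  fixes h Q :: real assumes "0 < Q"
  shows "ennreal h \<le> (\<Sum>m. ennreal (1 / Q) * indicator {real m / Q <..} h)"
proof (cases "0 < h")
  case False
  then have "ennreal h = 0" by (simp add: ennreal_eq_0_iff)
  then show ?thesis by simp
next
  case True
  define K where "K = nat \<lceil>Q * h\<rceil>"
  have "h \<le> real K / Q" unfolding K_def using assms True by (simp add: field_simps)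
  have below: "real m / Q < h" if "m < K" for m
  proof -
    have "real m < Q * h" using that True assms unfolding K_def by linarith
    then show ?thesis using assms by (simp add: field_simps)
  qed
  have "ennreal h \<le> ennreal (\<Sum>m<K. 1 / Q)"
    using \<open>h \<le> real K / Q\<close> by (intro ennreal_leI) simp
  also have "\<dots> = (\<Sum>m<K. ennreal (1 / Q) * indicator {real m / Q <..} h)"
    using assms below by (subst sum_ennreal[symmetric]) (auto intro!: sum.cong)
  also have "\<dots> \<le> (\<Sum>m. ennreal (1 / Q) * indicator {real m / Q <..} h)"
    by (intro sum_le_suminf summableI) auto
  finally show ?thesis .
qed

lemma suminf_exp_neg_one_power_le: "(\<Sum>m. exp (-1::real) ^ m) \<le> 2"
proof -
  have "exp (-1::real) \<le> 1 / 2"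
    using exp_ge_add_one_self[of 1] by (simp add: exp_minus field_simps)
  then show ?thesis by (simp add: suminf_geometric field_simps)
qed

locale ctmc =
  fixes S \<Gamma> :: "int set" and lam :: "int \<Rightarrow> int \<Rightarrow> real" and x0 :: int
    and M :: "'w measure" and Y :: "nat \<Rightarrow> 'w \<Rightarrow> int" and Hold :: "nat \<Rightarrow> 'w \<Rightarrow> real"
  assumes finite_Gamma: "finite \<Gamma>"
    and rates_supp: "\<And>\<eta> x. \<eta> \<notin> \<Gamma> \<Longrightarrow> lam \<eta> x = 0"
    and rates_nonneg: "\<And>\<eta> x. 0 \<le> lam \<eta> x"
    and rates_stay: "\<And>\<eta> x. x + \<eta> \<notin> S \<Longrightarrow> lam \<eta> x = 0"
    and out_rate_pos: "\<And>x. x \<in> S \<Longrightarrow> 0 < out_rate \<Gamma> lam x"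
    and realization: "ctmc_realization \<Gamma> lam x0 M Y Hold"
begin

abbreviation p where "p \<equiv> jump_prob \<Gamma> lam"
abbreviation q where "q \<equiv> out_rate \<Gamma> lam"

sublocale prob_space M
  using realization unfolding ctmc_realization_def by auto

lemma measurable_Y[measurable]: "Y n \<in> measurable M (count_space UNIV)"
  and measurable_Hold[measurable]: "Hold n \<in> borel_measurable M"
  using realization unfolding ctmc_realization_def by auto

definition path_prob :: "(nat \<Rightarrow> int) \<Rightarrow> nat \<Rightarrow> real" where
  "path_prob w k = (if w 0 = x0 then 1 else 0) * (\<Prod>i<k. p (w i) (w (Suc i)))"

lemma measure_cylinder:
  "(\<And>i. i \<le> n \<Longrightarrow> 0 \<le> t i) \<Longrightarrow>
    measure M {\<omega> \<in> space M. \<forall>i\<le>n. Y i \<omega> = w i \<and> t i < Hold i \<omega>}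
      = path_prob w n * (\<Prod>i\<le>n. exp (- q (w i) * t i))"
  using realization unfolding ctmc_realization_def path_prob_def by auto

lemma out_rate_nonneg: "0 \<le> q x"
  unfolding out_rate_def using rates_nonneg by (auto intro: sum_nonneg)

lemma jump_prob_nonneg: "0 \<le> p x y"
  unfolding jump_prob_def using rates_nonneg out_rate_nonneg by auto

lemma jump_prob_shift: "p x (x + \<eta>) = (if \<eta> = 0 then 0 else lam \<eta> x / q x)"
  unfolding jump_prob_def by auto

lemma sum_jump_prob: assumes "x \<in> S" shows "(\<Sum>\<eta>\<in>\<Gamma>. p x (x + \<eta>)) = 1"
proof -
  have "(\<Sum>\<eta>\<in>\<Gamma>. p x (x + \<eta>)) = (\<Sum>\<eta>\<in>\<Gamma> - {0}. lam \<eta> x / q x)"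
    unfolding jump_prob_shift using finite_Gamma by (intro sum.mono_neutral_cong_right) auto
  also have "\<dots> = q x / q x" unfolding out_rate_def by (rule sum_divide_distrib[symmetric])
  finally show ?thesis using out_rate_pos[OF assms] by simp
qed

lemma jump_prob_nonzeroD: assumes "p x y \<noteq> 0" shows "y \<in> S" and "y - x \<in> \<Gamma>"
proof -
  have "lam (y - x) x \<noteq> 0" using assms unfolding jump_prob_def by (auto split: if_splits)
  then show "y \<in> S" "y - x \<in> \<Gamma>" using rates_stay rates_supp by (metis add.commute diff_add_cancel)+
qed

lemma path_prob_nonneg: "0 \<le> path_prob w k"
  unfolding path_prob_def using jump_prob_nonneg by (auto intro: prod_nonneg)

lemma path_prob_extend: "path_prob (w(Suc k := y)) (Suc k) = path_prob w k * p (w k) y"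
proof -
  have "(\<Prod>i<k. p ((w(Suc k := y)) i) ((w(Suc k := y)) (Suc i))) = (\<Prod>i<k. p (w i) (w (Suc i)))"
    by (intro prod.cong) auto
  then show ?thesis unfolding path_prob_def by simp
qed

lemma positive_path_if_reachable:
  assumes "(a, b) \<in> {(a, a + \<eta>) | a \<eta>. a \<in> S \<and> \<eta> \<noteq> 0 \<and> lam \<eta> a > 0}\<^sup>*"
  shows "\<exists>k w. w 0 = a \<and> w k = b \<and> (\<forall>i<k. 0 < p (w i) (w (Suc i)))"
  using assms
proof (induction rule: rtrancl_induct)
  case base
  show ?case by (intro exI[of _ 0] exI[of _ "\<lambda>_. a"]) auto
next
  case (step b c)
  obtain k w where w: "w 0 = a" "w k = b" "\<forall>i<k. 0 < p (w i) (w (Suc i))" using step.IH by blast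
  obtain \<eta> where \<eta>: "c = b + \<eta>" "b \<in> S" "\<eta> \<noteq> 0" "lam \<eta> b > 0" using step.hyps(2) by auto
  have "0 < p b c" unfolding \<eta>(1) jump_prob_shift using \<eta> out_rate_pos[OF \<eta>(2)] by simp
  then have "\<forall>i<Suc k. 0 < p ((w(Suc k := c)) i) ((w(Suc k := c)) (Suc i))"
    using w by (auto simp: less_Suc_eq)
  then show ?case using w by (intro exI[of _ "Suc k"] exI[of _ "w(Suc k := c)"]) auto
qed

definition successors :: "int set \<Rightarrow> int \<Rightarrow> int set" where
  "successors A x = {y \<in> A. p x y \<noteq> 0}"

lemma successors_subset: "successors A x \<subseteq> (\<lambda>\<eta>. x + \<eta>) ` \<Gamma>"
proof
  fix y assume "y \<in> successors A x"
  then have "y - x \<in> \<Gamma>" using jump_prob_nonzeroD unfolding successors_def by auto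
  then show "y \<in> (\<lambda>\<eta>. x + \<eta>) ` \<Gamma>" by (intro image_eqI[of _ _ "y - x"]) auto
qed

lemma finite_successors: "finite (successors A x)"
  using successors_subset finite_Gamma finite_subset by blast

lemma sum_successors:
  "(\<Sum>y\<in>successors A x. p x y * g y) = (\<Sum>\<eta>\<in>\<Gamma>. p x (x + \<eta>) * (if x + \<eta> \<in> A then g (x + \<eta>) else 0))"
proof -
  have "(\<Sum>\<eta>\<in>\<Gamma>. p x (x + \<eta>) * (if x + \<eta> \<in> A then g (x + \<eta>) else 0))
      = (\<Sum>y\<in>(\<lambda>\<eta>. x + \<eta>) ` \<Gamma>. p x y * (if y \<in> A then g y else 0))"
    by (subst sum.reindex) (auto simp: inj_on_def)
  also have "\<dots> = (\<Sum>y\<in>successors A x. p x y * g y)"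
    using successors_subset finite_Gamma by (intro sum.mono_neutral_cong_right) (auto simp: successors_def)
  finally show ?thesis by simp
qed

text \<open>The holding times are positive almost surely; requiring it makes the event a cylinder
  of the form specified in \<open>ctmc_realization\<close>.\<close>
definition stay_event :: "int set \<Rightarrow> (nat \<Rightarrow> int) \<Rightarrow> nat \<Rightarrow> nat \<Rightarrow> 'w set" where
  "stay_event A w k n = {\<omega> \<in> space M. (\<forall>j\<le>k. Y j \<omega> = w j) \<and> (\<forall>j\<le>k + n. 0 < Hold j \<omega>)
      \<and> (\<forall>i. k < i \<and> i \<le> k + n \<longrightarrow> Y i \<omega> \<in> A)}"

lemma sets_stay_event[measurable]: "stay_event A w k n \<in> sets M"
  unfolding stay_event_def by measurable

lemma stay_event_Suc_subset: "stay_event A w k (Suc n) \<subseteq> stay_event A w k n"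
  and stay_event_subset_0: "stay_event A w k n \<subseteq> stay_event A w k 0"
  unfolding stay_event_def by auto

lemma stay_event_Suc: "stay_event A w k (Suc n) = (\<Union>y\<in>A. stay_event A (w(Suc k := y)) (Suc k) n)"
proof (intro set_eqI iffI)
  fix \<omega> assume "\<omega> \<in> stay_event A w k (Suc n)"
  then have "\<omega> \<in> stay_event A (w(Suc k := Y (Suc k) \<omega>)) (Suc k) n" "Y (Suc k) \<omega> \<in> A"
    unfolding stay_event_def by (auto simp: le_Suc_eq)
  then show "\<omega> \<in> (\<Union>y\<in>A. stay_event A (w(Suc k := y)) (Suc k) n)" by auto
next
  fix \<omega> assume "\<omega> \<in> (\<Union>y\<in>A. stay_event A (w(Suc k := y)) (Suc k) n)"
  then obtain y where "y \<in> A" and \<omega>: "\<omega> \<in> stay_event A (w(Suc k := y)) (Suc k) n" by auto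
  then have "Y (Suc k) \<omega> = y" unfolding stay_event_def by auto
  have "Y j \<omega> = w j" if "j \<le> k" for j
  proof -
    have "j \<le> Suc k" "j \<noteq> Suc k" using that by auto
    then show ?thesis using \<omega> unfolding stay_event_def by auto
  qed
  moreover have "Y i \<omega> \<in> A" if "k < i" "i \<le> k + Suc n" for i
  proof -
    have "i = Suc k \<or> (Suc k < i \<and> i \<le> Suc k + n)" using that by auto
    then show ?thesis using \<omega> \<open>y \<in> A\<close> \<open>Y (Suc k) \<omega> = y\<close> unfolding stay_event_def by auto
  qed
  ultimately show "\<omega> \<in> stay_event A w k (Suc n)" using \<omega> unfolding stay_event_def by auto
qed

lemma emeasure_stay_event_0: "emeasure M (stay_event A w k 0) = ennreal (path_prob w k)"
proof -
  have "stay_event A w k 0 = {\<omega> \<in> space M. \<forall>i\<le>k. Y i \<omega> = w i \<and> 0 < Hold i \<omega>}"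
    unfolding stay_event_def by auto
  then show ?thesis using measure_cylinder[of k "\<lambda>_. 0" w] by (simp add: emeasure_eq_measure)
qed

lemma stay_event_null:
  assumes "p (w k) y = 0" shows "stay_event A (w(Suc k := y)) (Suc k) n \<in> null_sets M"
proof -
  have "emeasure M (stay_event A (w(Suc k := y)) (Suc k) 0) = 0"
    unfolding emeasure_stay_event_0 path_prob_extend using assms by simp
  then show ?thesis
    using emeasure_mono[OF stay_event_subset_0 sets_stay_event, of A "w(Suc k := y)" "Suc k" n]
    by (auto intro: null_setsI)
qed

lemma nn_integral_stay_event_Suc:
  assumes [measurable]: "\<phi> \<in> borel_measurable M"
  shows "(\<integral>\<^sup>+\<omega>. \<phi> \<omega> * indicator (stay_event A w k (Suc n)) \<omega> \<partial>M)
    = (\<Sum>y\<in>successors A (w k). \<integral>\<^sup>+\<omega>. \<phi> \<omega> * indicator (stay_event A (w(Suc k := y)) (Suc k) n) \<omega> \<partial>M)"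
proof -
  define F where "F y = stay_event A (w(Suc k := y)) (Suc k) n" for y
  define U where "U = (\<Union>y\<in>A - successors A (w k). F y)"
  have U: "U \<in> null_sets M" unfolding U_def F_def
    by (intro null_sets_UN' stay_event_null) (auto simp: successors_def)
  have "AE \<omega> in M. \<phi> \<omega> * indicator (stay_event A w k (Suc n)) \<omega>
      = (\<Sum>y\<in>successors A (w k). \<phi> \<omega> * indicator (F y) \<omega>)"
    using AE_not_in[OF U]
  proof eventually_elim
    case (elim \<omega>)
    then have "\<omega> \<in> stay_event A w k (Suc n) \<longleftrightarrow> \<omega> \<in> \<Union>(F ` successors A (w k))"
      unfolding stay_event_Suc U_def F_def by (auto simp: successors_def)
    then have "indicator (stay_event A w k (Suc n)) \<omega> = (indicator (\<Union>(F ` successors A (w k))) \<omega> :: ennreal)"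
      by (simp add: indicator_def)
    also have "\<dots> = (\<Sum>y\<in>successors A (w k). indicator (F y) \<omega>)"
      unfolding F_def by (intro indicator_UN_disjoint finite_successors) (auto simp: disjoint_family_on_def stay_event_def)
    finally show ?case by (simp add: sum_distrib_left)
  qed
  then have "(\<integral>\<^sup>+\<omega>. \<phi> \<omega> * indicator (stay_event A w k (Suc n)) \<omega> \<partial>M)
      = (\<integral>\<^sup>+\<omega>. (\<Sum>y\<in>successors A (w k). \<phi> \<omega> * indicator (F y) \<omega>) \<partial>M)"
    by (rule nn_integral_cong_AE)
  also have "\<dots> = (\<Sum>y\<in>successors A (w k). \<integral>\<^sup>+\<omega>. \<phi> \<omega> * indicator (F y) \<omega> \<partial>M)"
    unfolding F_def by (intro nn_integral_sum) measurable
  finally show ?thesis unfolding F_def .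
qed

lemma emeasure_Hold_gt:
  assumes "0 \<le> t"
  shows "emeasure M (stay_event A w k 0 \<inter> {\<omega>. t < Hold k \<omega>}) = ennreal (path_prob w k * exp (- q (w k) * t))"
proof -
  define s where "s i = (if i = k then t else 0)" for i
  have "stay_event A w k 0 \<inter> {\<omega>. t < Hold k \<omega>} = {\<omega> \<in> space M. \<forall>i\<le>k. Y i \<omega> = w i \<and> s i < Hold i \<omega>}"
  proof (intro set_eqI iffI)
    fix \<omega> assume "\<omega> \<in> stay_event A w k 0 \<inter> {\<omega>. t < Hold k \<omega>}"
    then show "\<omega> \<in> {\<omega> \<in> space M. \<forall>i\<le>k. Y i \<omega> = w i \<and> s i < Hold i \<omega>}"
      unfolding stay_event_def s_def by auto
  next
    fix \<omega> assume \<omega>: "\<omega> \<in> {\<omega> \<in> space M. \<forall>i\<le>k. Y i \<omega> = w i \<and> s i < Hold i \<omega>}"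
    have "0 < Hold i \<omega>" if "i \<le> k" for i
      using \<omega> that assms unfolding s_def by (smt (verit) mem_Collect_eq)
    then show "\<omega> \<in> stay_event A w k 0 \<inter> {\<omega>. t < Hold k \<omega>}"
      using \<omega> unfolding stay_event_def s_def by auto
  qed
  moreover have "(\<Prod>i\<le>k. exp (- q (w i) * s i)) = exp (- q (w k) * t)"
    unfolding s_def by (subst prod.remove[of _ k]) auto
  ultimately show ?thesis
    using measure_cylinder[of k s w] assms by (simp add: emeasure_eq_measure s_def)
qed

text \<open>The mean of \<open>Hold k\<close> is bounded by a layer-cake sum over the grid \<open>m / q\<close>, which gives
  \<open>1 / (q (1 - exp (-1))) \<le> 2 / q\<close>.\<close>
lemma nn_integral_Hold_stay_event_0_le:
  assumes "w k \<in> S"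
  shows "(\<integral>\<^sup>+\<omega>. ennreal (Hold k \<omega>) * indicator (stay_event A w k 0) \<omega> \<partial>M)
    \<le> ennreal (2 * path_prob w k / q (w k))"
proof -
  define Q where "Q = q (w k)"
  have Q: "0 < Q" unfolding Q_def using out_rate_pos[OF assms] .
  define E where "E m = stay_event A w k 0 \<inter> {\<omega>. real m / Q < Hold k \<omega>}" for m
  have [measurable]: "E m \<in> sets M" for m
  proof -
    have "E m = stay_event A w k 0 \<inter> {\<omega> \<in> space M. real m / Q < Hold k \<omega>}"
      unfolding E_def stay_event_def by auto
    then show ?thesis by simp
  qed
  have E: "emeasure M (E m) = ennreal (path_prob w k * exp (-1) ^ m)" for m
    unfolding E_def using Q by (simp add: emeasure_Hold_gt Q_def exp_of_nat_mult[symmetric])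
  have "(\<integral>\<^sup>+\<omega>. ennreal (Hold k \<omega>) * indicator (stay_event A w k 0) \<omega> \<partial>M)
      \<le> (\<integral>\<^sup>+\<omega>. (\<Sum>m. ennreal (1 / Q) * indicator (E m) \<omega>) \<partial>M)"
  proof (intro nn_integral_mono)
    fix \<omega>
    show "ennreal (Hold k \<omega>) * indicator (stay_event A w k 0) \<omega> \<le> (\<Sum>m. ennreal (1 / Q) * indicator (E m) \<omega>)"
      using ennreal_le_suminf_grid[OF Q, of "Hold k \<omega>"]
      by (cases "\<omega> \<in> stay_event A w k 0") (auto simp: E_def indicator_def)
  qed
  also have "\<dots> = (\<Sum>m. \<integral>\<^sup>+\<omega>. ennreal (1 / Q) * indicator (E m) \<omega> \<partial>M)"
    by (intro nn_integral_suminf) measurable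
  also have "\<dots> = (\<Sum>m. ennreal (path_prob w k / Q * exp (-1) ^ m))"
    using Q path_prob_nonneg by (simp add: nn_integral_cmult_indicator E ennreal_mult[symmetric])
  also have "\<dots> = ennreal (\<Sum>m. path_prob w k / Q * exp (-1) ^ m)"
    using Q path_prob_nonneg by (intro suminf_ennreal2 summable_mult summable_geometric) auto
  also have "(\<Sum>m. path_prob w k / Q * exp (-1::real) ^ m) = path_prob w k / Q * (\<Sum>m. exp (-1) ^ m)"
    by (intro suminf_mult summable_geometric) simp
  also have "\<dots> \<le> ennreal (path_prob w k / Q * 2)"
    using Q path_prob_nonneg suminf_exp_neg_one_power_le by (intro ennreal_leI mult_left_mono) auto
  also have "\<dots> = ennreal (2 * path_prob w k / q (w k))"
    using Q by (simp add: Q_def field_simps)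
  finally show ?thesis .
qed

primrec stay_prob :: "int set \<Rightarrow> nat \<Rightarrow> int \<Rightarrow> real" where
  "stay_prob A 0 x = 1"
| "stay_prob A (Suc n) x = (\<Sum>\<eta>\<in>\<Gamma>. p x (x + \<eta>) * (if x + \<eta> \<in> A then stay_prob A n (x + \<eta>) else 0))"

primrec mean_holding :: "int set \<Rightarrow> nat \<Rightarrow> int \<Rightarrow> real" where
  "mean_holding A 0 x = 1 / q x"
| "mean_holding A (Suc n) x = (\<Sum>\<eta>\<in>\<Gamma>. p x (x + \<eta>) * (if x + \<eta> \<in> A then mean_holding A n (x + \<eta>) else 0))"

lemma stay_prob_nonneg: "0 \<le> stay_prob A n x"
  by (induction n arbitrary: x) (auto intro!: sum_nonneg mult_nonneg_nonneg jump_prob_nonneg)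

lemma mean_holding_nonneg: "0 \<le> mean_holding A n x"
  by (induction n arbitrary: x) (auto intro!: sum_nonneg mult_nonneg_nonneg jump_prob_nonneg simp: out_rate_nonneg)

lemma emeasure_stay_event: "emeasure M (stay_event A w k n) = ennreal (path_prob w k * stay_prob A n (w k))"
proof (induction n arbitrary: w k)
  case 0
  then show ?case by (simp add: emeasure_stay_event_0)
next
  case (Suc n)
  have "emeasure M (stay_event A w k (Suc n)) = (\<Sum>y\<in>successors A (w k). emeasure M (stay_event A (w(Suc k := y)) (Suc k) n))"
    using nn_integral_stay_event_Suc[of "\<lambda>_. 1" A w k n] by simp
  also have "\<dots> = (\<Sum>y\<in>successors A (w k). ennreal (path_prob w k * (p (w k) y * stay_prob A n y)))"
    by (simp only: Suc.IH path_prob_extend fun_upd_same mult.assoc)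
  also have "\<dots> = ennreal (path_prob w k * stay_prob A (Suc n) (w k))"
    using path_prob_nonneg jump_prob_nonneg stay_prob_nonneg
    by (subst sum_ennreal) (auto simp: sum_distrib_left[symmetric] sum_successors)
  finally show ?case .
qed

lemma nn_integral_Hold_stay_event_le:
  "w k \<in> S \<Longrightarrow> (\<integral>\<^sup>+\<omega>. ennreal (Hold (k + n) \<omega>) * indicator (stay_event A w k n) \<omega> \<partial>M)
    \<le> ennreal (2 * path_prob w k * mean_holding A n (w k))"
proof (induction n arbitrary: w k)
  case 0
  then show ?case using nn_integral_Hold_stay_event_0_le[of w k A] by simp
next
  case (Suc n)
  have "(\<integral>\<^sup>+\<omega>. ennreal (Hold (k + Suc n) \<omega>) * indicator (stay_event A w k (Suc n)) \<omega> \<partial>M)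
     = (\<Sum>y\<in>successors A (w k). \<integral>\<^sup>+\<omega>. ennreal (Hold (Suc k + n) \<omega>) * indicator (stay_event A (w(Suc k := y)) (Suc k) n) \<omega> \<partial>M)"
    by (simp add: nn_integral_stay_event_Suc)
  also have "\<dots> \<le> (\<Sum>y\<in>successors A (w k). ennreal (2 * path_prob w k * (p (w k) y * mean_holding A n y)))"
  proof (intro sum_mono)
    fix y assume "y \<in> successors A (w k)"
    then have "y \<in> S" using jump_prob_nonzeroD unfolding successors_def by auto
    then have "(\<integral>\<^sup>+\<omega>. ennreal (Hold (Suc k + n) \<omega>) * indicator (stay_event A (w(Suc k := y)) (Suc k) n) \<omega> \<partial>M)
        \<le> ennreal (2 * path_prob (w(Suc k := y)) (Suc k) * mean_holding A n ((w(Suc k := y)) (Suc k)))"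
      by (intro Suc.IH) simp
    then show "(\<integral>\<^sup>+\<omega>. ennreal (Hold (Suc k + n) \<omega>) * indicator (stay_event A (w(Suc k := y)) (Suc k) n) \<omega> \<partial>M)
        \<le> ennreal (2 * path_prob w k * (p (w k) y * mean_holding A n y))"
      by (simp only: path_prob_extend fun_upd_same mult.assoc)
  qed
  also have "\<dots> = ennreal (2 * path_prob w k * mean_holding A (Suc n) (w k))"
    using path_prob_nonneg jump_prob_nonneg mean_holding_nonneg
    by (subst sum_ennreal) (auto simp: sum_distrib_left[symmetric] sum_successors)
  finally show ?case .
qed

lemma sets_convergent_Hold: "{\<omega> \<in> space M. convergent (\<lambda>n. \<Sum>i<n. Hold i \<omega>)} \<in> sets M"
proof -
  have eq: "{\<omega> \<in> space M. convergent (\<lambda>n. \<Sum>i<n. Hold i \<omega>)} = {\<omega> \<in> space M. Cauchy (\<lambda>n. \<Sum>i<n. Hold i \<omega>)}"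
    by (simp add: Cauchy_convergent_iff)
  show ?thesis unfolding eq by measurable
qed

context
  fixes f :: "int \<Rightarrow> real" and A :: "int set"
  assumes f_nonneg: "\<And>x. 0 \<le> f x"
    and f_drift: "\<And>x. x \<in> S \<Longrightarrow> x \<in> A \<Longrightarrow> (\<Sum>\<eta>\<in>\<Gamma>. lam \<eta> x * (f (x + \<eta>) - f x)) \<le> -1"
begin

lemma expected_jump_le:
  assumes "x \<in> S" "x \<in> A"
  shows "(\<Sum>\<eta>\<in>\<Gamma>. p x (x + \<eta>) * f (x + \<eta>)) \<le> f x - 1 / q x"
proof -
  have "(\<Sum>\<eta>\<in>\<Gamma>. p x (x + \<eta>) * f (x + \<eta>)) - f x = (\<Sum>\<eta>\<in>\<Gamma>. p x (x + \<eta>) * (f (x + \<eta>) - f x))"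
    using sum_jump_prob[OF assms(1)] by (simp add: sum_subtractf right_diff_distrib sum_distrib_right[symmetric])
  also have "\<dots> = (\<Sum>\<eta>\<in>\<Gamma>. lam \<eta> x * (f (x + \<eta>) - f x) / q x)"
    by (intro sum.cong refl) (simp add: jump_prob_shift)
  also have "\<dots> = (\<Sum>\<eta>\<in>\<Gamma>. lam \<eta> x * (f (x + \<eta>) - f x)) / q x"
    by (simp add: sum_divide_distrib)
  also have "\<dots> \<le> -1 / q x"
    using f_drift[OF assms] out_rate_pos[OF assms(1)] by (intro divide_right_mono) auto
  finally show ?thesis by simp
qed

text \<open>Optional stopping for the supermartingale \<open>f\<close> of the jump chain killed on leaving \<open>A\<close>.\<close>
lemma stay_prob_ge:
  assumes "0 < c" and outside: "\<And>y. y \<notin> A \<Longrightarrow> c \<le> f y"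
  shows "x \<in> S \<Longrightarrow> x \<in> A \<Longrightarrow> 1 - f x / c \<le> stay_prob A n x"
proof (induction n arbitrary: x)
  case 0
  then show ?case using f_nonneg \<open>0 < c\<close> by simp
next
  case (Suc n)
  have step: "p x (x + \<eta>) * (1 - f (x + \<eta>) / c)
      \<le> p x (x + \<eta>) * (if x + \<eta> \<in> A then stay_prob A n (x + \<eta>) else 0)" for \<eta>
  proof (cases "p x (x + \<eta>) = 0")
    case False
    then have "x + \<eta> \<in> S" using jump_prob_nonzeroD by auto
    moreover have "1 - f (x + \<eta>) / c \<le> 0" if "x + \<eta> \<notin> A"
      using outside[OF that] \<open>0 < c\<close> by simp
    ultimately show ?thesis
      using Suc.IH jump_prob_nonneg by (auto intro: mult_left_mono simp: mult_nonneg_nonpos)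
  qed simp
  have "(\<Sum>\<eta>\<in>\<Gamma>. p x (x + \<eta>) * f (x + \<eta>)) \<le> f x"
    using expected_jump_le[OF Suc.prems] out_rate_nonneg[of x]
    by (smt (verit) divide_nonneg_nonneg zero_le_one)
  then have "1 - f x / c \<le> 1 - (\<Sum>\<eta>\<in>\<Gamma>. p x (x + \<eta>) * f (x + \<eta>)) / c"
    using \<open>0 < c\<close> by (simp add: divide_right_mono)
  also have "\<dots> = (\<Sum>\<eta>\<in>\<Gamma>. p x (x + \<eta>) * (1 - f (x + \<eta>) / c))"
    using sum_jump_prob[OF Suc.prems(1)]
    by (simp add: right_diff_distrib sum_subtractf sum_divide_distrib)
  also have "\<dots> \<le> stay_prob A (Suc n) x"
    unfolding stay_prob.simps by (intro sum_mono step)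
  finally show ?case .
qed

lemma sum_mean_holding_le:
  "x \<in> S \<Longrightarrow> x \<in> A \<Longrightarrow> (\<Sum>i\<le>n. mean_holding A i x) \<le> f x"
proof (induction n arbitrary: x)
  case 0
  have "0 \<le> (\<Sum>\<eta>\<in>\<Gamma>. p x (x + \<eta>) * f (x + \<eta>))"
    by (intro sum_nonneg mult_nonneg_nonneg jump_prob_nonneg f_nonneg)
  then show ?case using expected_jump_le[OF 0] by simp
next
  case (Suc n)
  have step: "p x (x + \<eta>) * (if x + \<eta> \<in> A then \<Sum>i\<le>n. mean_holding A i (x + \<eta>) else 0)
      \<le> p x (x + \<eta>) * f (x + \<eta>)" for \<eta>
  proof (cases "p x (x + \<eta>) = 0")
    case False
    then have "x + \<eta> \<in> S" using jump_prob_nonzeroD by auto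
    then show ?thesis
      using Suc.IH jump_prob_nonneg f_nonneg by (auto intro: mult_left_mono)
  qed simp
  have "(\<Sum>i\<le>n. mean_holding A (Suc i) x)
      = (\<Sum>\<eta>\<in>\<Gamma>. \<Sum>i\<le>n. p x (x + \<eta>) * (if x + \<eta> \<in> A then mean_holding A i (x + \<eta>) else 0))"
    unfolding mean_holding.simps by (rule sum.swap)
  also have "\<dots> = (\<Sum>\<eta>\<in>\<Gamma>. p x (x + \<eta>) * (if x + \<eta> \<in> A then \<Sum>i\<le>n. mean_holding A i (x + \<eta>) else 0))"
    by (intro sum.cong refl) (auto simp: sum_distrib_left)
  also have "\<dots> \<le> (\<Sum>\<eta>\<in>\<Gamma>. p x (x + \<eta>) * f (x + \<eta>))"
    by (intro sum_mono step)
  also have "\<dots> \<le> f x - 1 / q x" by (rule expected_jump_le[OF Suc.prems])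
  finally show ?case by (simp only: sum.atMost_Suc_shift mean_holding.simps(1))
qed

lemma measure_stay_forever_ge:
  assumes "0 < c" and outside: "\<And>y. y \<notin> A \<Longrightarrow> c \<le> f y" and "w k \<in> S" "w k \<in> A"
  shows "path_prob w k * (1 - f (w k) / c) \<le> measure M (\<Inter>n. stay_event A w k n)"
proof -
  have "(\<lambda>n. measure M (stay_event A w k n)) \<longlonglongrightarrow> measure M (\<Inter>n. stay_event A w k n)"
    by (intro finite_Lim_measure_decseq decseq_SucI stay_event_Suc_subset) auto
  moreover have "path_prob w k * (1 - f (w k) / c) \<le> measure M (stay_event A w k n)" for n
    using emeasure_stay_event[of A w k n] stay_prob_ge[OF assms] path_prob_nonneg stay_prob_nonneg
    by (simp add: measure_def mult_left_mono)
  ultimately show ?thesis by (intro LIMSEQ_le_const) auto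
qed

lemma AE_stay_forever_summable_Hold:
  assumes "w k \<in> S" "w k \<in> A"
  shows "AE \<omega> in M. \<omega> \<in> (\<Inter>n. stay_event A w k n) \<longrightarrow> summable (\<lambda>i. Hold i \<omega>)"
proof -
  define E where "E = (\<Inter>n. stay_event A w k n)"
  have [measurable]: "E \<in> sets M" unfolding E_def by measurable
  define G where "G \<omega> = (\<Sum>i. ennreal (Hold (k + i) \<omega>) * indicator E \<omega>)" for \<omega>
  have G_le: "(\<integral>\<^sup>+\<omega>. ennreal (Hold (k + i) \<omega>) * indicator E \<omega> \<partial>M)
      \<le> ennreal (2 * path_prob w k * mean_holding A i (w k))" for i
  proof -
    have "(\<integral>\<^sup>+\<omega>. ennreal (Hold (k + i) \<omega>) * indicator E \<omega> \<partial>M)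
        \<le> (\<integral>\<^sup>+\<omega>. ennreal (Hold (k + i) \<omega>) * indicator (stay_event A w k i) \<omega> \<partial>M)"
      unfolding E_def by (intro nn_integral_mono mult_left_mono) (auto simp: indicator_def)
    then show ?thesis using nn_integral_Hold_stay_event_le[of w k i A] assms(1) order_trans by blast
  qed
  have partial_sums: "(\<Sum>i<n. ennreal (2 * path_prob w k * mean_holding A i (w k))) \<le> ennreal (2 * path_prob w k * f (w k))" for n
  proof -
    have "(\<Sum>i<n. mean_holding A i (w k)) \<le> (\<Sum>i\<le>n. mean_holding A i (w k))"
      using mean_holding_nonneg by (intro sum_mono2) auto
    also have "\<dots> \<le> f (w k)" by (rule sum_mean_holding_le[OF assms])
    finally have "2 * path_prob w k * (\<Sum>i<n. mean_holding A i (w k)) \<le> 2 * path_prob w k * f (w k)"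
      using path_prob_nonneg by (intro mult_left_mono) auto
    moreover have "(\<Sum>i<n. ennreal (2 * path_prob w k * mean_holding A i (w k)))
        = ennreal (2 * path_prob w k * (\<Sum>i<n. mean_holding A i (w k)))"
      using path_prob_nonneg mean_holding_nonneg by (simp add: sum_ennreal sum_distrib_left)
    ultimately show ?thesis by (simp add: ennreal_leI)
  qed
  have "(\<integral>\<^sup>+\<omega>. G \<omega> \<partial>M) = (\<Sum>i. \<integral>\<^sup>+\<omega>. ennreal (Hold (k + i) \<omega>) * indicator E \<omega> \<partial>M)"
    unfolding G_def by (intro nn_integral_suminf) measurable
  also have "\<dots> \<le> (\<Sum>i. ennreal (2 * path_prob w k * mean_holding A i (w k)))"
    by (intro suminf_le G_le summableI)
  also have "\<dots> \<le> ennreal (2 * path_prob w k * f (w k))"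
    using ennreal_suminf_bound_add[of "\<lambda>i. ennreal (2 * path_prob w k * mean_holding A i (w k))" 0] partial_sums
    by simp
  finally have "AE \<omega> in M. G \<omega> \<noteq> \<infinity>"
    by (intro nn_integral_noteq_infinite) (auto simp: G_def top_unique)
  then show ?thesis
  proof eventually_elim
    case (elim \<omega>)
    show ?case
    proof
      assume stays: "\<omega> \<in> (\<Inter>n. stay_event A w k n)"
      have Hold_pos: "0 \<le> Hold j \<omega>" for j
      proof -
        have "\<omega> \<in> stay_event A w k j" using stays by blast
        then show ?thesis unfolding stay_event_def by (auto intro: less_imp_le)
      qed
      have "\<omega> \<in> E" using stays unfolding E_def .
      then have "(\<Sum>i. ennreal (Hold (k + i) \<omega>)) \<noteq> \<top>" using elim by (simp add: G_def)
      then have "summable (\<lambda>i. Hold (i + k) \<omega>)"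
        using Hold_pos by (subst add.commute) (intro summable_suminf_not_top)
      then show "summable (\<lambda>i. Hold i \<omega>)" by (rule summable_iff_shift[THEN iffD1])
    qed
  qed
qed

theorem explosive_if_lyapunov:
  assumes outside: "\<And>y. y \<notin> A \<Longrightarrow> c \<le> f y"
    and reach: "(x0, z) \<in> {(a, a + \<eta>) | a \<eta>. a \<in> S \<and> \<eta> \<noteq> 0 \<and> lam \<eta> a > 0}\<^sup>*"
    and "z \<in> S" and "f z < c"
  shows "explosive M Hold"
proof -
  have "z \<in> A" using outside \<open>f z < c\<close> by force
  have "0 < c" using f_nonneg[of z] \<open>f z < c\<close> by linarith
  obtain k w where w: "w 0 = x0" "w k = z" "\<forall>i<k. 0 < p (w i) (w (Suc i))"
    using positive_path_if_reachable[OF reach] by blast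
  have "0 < path_prob w k" unfolding path_prob_def using w by (auto intro!: prod_pos)
  then have "0 < path_prob w k * (1 - f z / c)" using \<open>0 < c\<close> \<open>f z < c\<close> by simp
  also have "\<dots> \<le> measure M (\<Inter>n. stay_event A w k n)"
    using measure_stay_forever_ge[OF \<open>0 < c\<close> outside, of w k] w \<open>z \<in> S\<close> \<open>z \<in> A\<close> by simp
  also have "\<dots> \<le> measure M {\<omega> \<in> space M. convergent (\<lambda>n. \<Sum>i<n. Hold i \<omega>)}"
  proof -
    have "AE \<omega> in M. \<omega> \<in> (\<Inter>n. stay_event A w k n) \<longrightarrow> summable (\<lambda>i. Hold i \<omega>)"
      using AE_stay_forever_summable_Hold[of w k] w(2) \<open>z \<in> S\<close> \<open>z \<in> A\<close> by simp
    then have "AE \<omega> in M. \<omega> \<in> (\<Inter>n. stay_event A w k n)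
        \<longrightarrow> \<omega> \<in> {\<omega> \<in> space M. convergent (\<lambda>n. \<Sum>i<n. Hold i \<omega>)}"
      using AE_space by eventually_elim (auto simp: summable_iff_convergent)
    then show ?thesis
      using emeasure_mono_AE[OF _ sets_convergent_Hold] by (simp add: emeasure_eq_measure)
  qed
  finally show ?thesis unfolding explosive_def .
qed

end

end

section \<open>Explosion under conditions (a) and (b)\<close>

lemma out_rate_pos_if_vfun_pos:
  assumes "finite \<Gamma>" and "\<And>\<eta>. 0 \<le> lam \<eta> x" and "0 < vfun \<Gamma> lam x"
  shows "0 < out_rate \<Gamma> lam x"
proof -
  have "(\<Sum>\<eta>\<in>\<Gamma>. (real_of_int \<eta>)^2 * lam \<eta> x) \<noteq> 0"
    using assms(3) unfolding vfun_def by auto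
  then obtain \<eta> where \<eta>: "\<eta> \<in> \<Gamma>" "(real_of_int \<eta>)^2 * lam \<eta> x \<noteq> 0"
    by (meson sum.neutral)
  then have "\<eta> \<noteq> 0" "0 < lam \<eta> x" using assms(2)[of \<eta>] by (auto simp: less_le)
  moreover have "lam \<eta> x \<le> out_rate \<Gamma> lam x"
    unfolding out_rate_def using \<eta> \<open>\<eta> \<noteq> 0\<close> assms(1,2) by (intro member_le_sum) auto
  ultimately show ?thesis by linarith
qed

theorem mainTheorem6:
  fixes S \<Gamma> :: "int set" and lam :: "int \<Rightarrow> int \<Rightarrow> real" and x0 :: int
    and M :: "'w measure" and Y :: "nat \<Rightarrow> 'w \<Rightarrow> int" and Hold :: "nat \<Rightarrow> 'w \<Rightarrow> real"
  assumes S_nonneg: "S \<subseteq> {0..}" and S_inf: "infinite S"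
    and Gamma_fin: "finite \<Gamma>"
    and rates_supp: "\<forall>\<eta> x. \<eta> \<notin> \<Gamma> \<longrightarrow> lam \<eta> x = 0"
    and rates_nonneg: "\<forall>\<eta> x. 0 \<le> lam \<eta> x"
    and rates_stay: "\<forall>\<eta> x. x + \<eta> \<notin> S \<longrightarrow> lam \<eta> x = 0"
    and irred: "irreducible_chain S lam"
    and v_pos: "\<forall>x\<in>S. vfun \<Gamma> lam x > 0"
    and x0_in: "x0 \<in> S"
    and real: "ctmc_realization \<Gamma> lam x0 M Y Hold"
    and cond_a: "\<exists>c > 2. \<exists>C > 0. \<exists>N. \<forall>x\<in>S. x \<ge> N \<longrightarrow>
                   real_of_int x powr c \<le> C * (drift \<Gamma> lam x * real_of_int x - vfun \<Gamma> lam x)"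
    and cond_b: "Liminf (at_top_in S) (\<lambda>x. ereal (Hfun \<Gamma> lam 1 x)) > 1"
    and cond_c: "\<forall>q > 2.
        Liminf (at_top_in S) (\<lambda>x. ereal (vfun \<Gamma> lam x / ((real_of_int x)^2 * ln (real_of_int x) powr q))) = 0
        \<longrightarrow> ((\<lambda>x. vfun \<Gamma> lam x / ((real_of_int x)^2 * ln (real_of_int x) powr q)) \<longlongrightarrow> 0) (at_top_in S)"
  shows "explosive M Hold"
proof -
  obtain N where lyapunov_drift: "\<And>x. x \<in> S \<Longrightarrow> N \<le> x \<Longrightarrow> (\<Sum>\<eta>\<in>\<Gamma>. lam \<eta> x * (lyapunov (x + \<eta>) - lyapunov x)) \<le> -1"
    using eventually_lyapunov_generator_le[OF Gamma_fin rates_nonneg v_pos cond_a cond_b]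
    unfolding at_top_in_def eventually_inf_principal eventually_at_top_linorder by blast
  interpret ctmc S \<Gamma> lam x0 M Y Hold
    using Gamma_fin rates_supp rates_nonneg rates_stay real out_rate_pos_if_vfun_pos[OF Gamma_fin] v_pos
    by unfold_locales auto
  have "\<not> S \<subseteq> {0..max N 16}" using S_inf finite_subset by blast
  then obtain z where "z \<in> S" "max N 16 < z" using S_nonneg by force
  moreover have "(x0, z) \<in> {(a, a + \<eta>) | a \<eta>. a \<in> S \<and> \<eta> \<noteq> 0 \<and> lam \<eta> a > 0}\<^sup>*"
    using irred x0_in \<open>z \<in> S\<close> unfolding irreducible_chain_def by blast
  ultimately show ?thesis
    using lyapunov_drift lyapunov_nonneg lyapunov_antimono lyapunov_strict_antimono
    by (intro explosive_if_lyapunov[where f = lyapunov and A = "{N..}" and c = "lyapunov N"]) auto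
qed

end
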